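(* Let $V_1\subseteq\mathbb{F}[\mathbf{y}]$ and $V_2\subseteq\mathbb{F}[\mathbf{z}]$ be finite-dimensional vector spaces of polynomials over disjoint sets of variables $\mathbf{y},\mathbf{z}$. Suppose $\mathrm{wt}_1:\mathbf{y}\to\mathbb{N}^k$ and $\mathrm{wt}_2:\mathbf{z}\to\mathbb{N}^k$ are BIWAs for $V_1$ and $V_2$ isolating bases (monomial index sets) $B_1$ and $B_2$ respectively, and let $w:\mathbf{y}\cup\mathbf{z}\to\mathbb{N}$ be a weight assignment that separates $B_1\cdot B_2=\{m_1m_2:m_1\in B_1,m_2\in B_2\}$. Define $\mathrm{wt}:\mathbf{y}\cup\mathbf{z}\to\mathbb{N}^{k+1}$ by $\mathrm{wt}(y_i)=(\mathrm{wt}_1(y_i),w(y_i))$ for $y_i\in\mathbf{y}$ and $\mathrm{wt}(z_i)=(\mathrm{wt}_2(z_i),w(z_i))$ for $z_i\in\mathbf{z}$. Then $\mathrm{wt}$ is a BIWA for $V_1\cdot V_2=\operatorname{span}\{fg:f\in V_1,g\in V_2\}$ (isolating $B_1\cdot B_2$).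
   Context: A weight assignment $\mathrm{wt}:\mathbf{y}\to\mathbb{N}^k$ is extended to monomials additively: $\mathrm{wt}(\prod_i y_i^{e_i})=\sum_ie_i\,\mathrm{wt}(y_i)$. A weight assignment separates a set $S$ of monomials if distinct monomials in $S$ get distinct weights. For a finite-dimensional space $V$ of polynomials, regard $V$ as a matrix whose rows are coefficient vectors of a spanning set and whose columns are indexed by monomials; $V_m$ is the column of monomial $m$. $\mathrm{wt}$ is a BIWA for $V$ isolating $B$ if $B$ is a set of monomials whose columns form a basis of the column space, distinct elements of $B$ have distinct weights, and for every monomial $m\notin B$, $V_m\in\operatorname{span}\{V_{m'}:m'\in B,\ \mathrm{wt}(m')\prec\mathrm{wt}(m)\}$, with $\prec$ the lexicographic order. *)

theory Defs
  imports Main "HOL-Library.Poly_Mapping"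
begin

(* Monomial product is addition
  of exponent vectors; polynomial product is the convolution of Poly_Mapping. *)

type_synonym ('v, 'a) mpoly = "('v \<Rightarrow>\<^sub>0 nat) \<Rightarrow>\<^sub>0 'a"

definition pspan :: "('v, 'a::field) mpoly set \<Rightarrow> ('v, 'a) mpoly set" where
  "pspan S = {p. \<exists>F c. finite F \<and> F \<subseteq> S \<and>
      p = (\<Sum>f\<in>F. Poly_Mapping.map (\<lambda>x. c f * x) f)}"

(* Vectors in N^n are encoded as functions nat => nat, of which only
  the coordinates 0..<n are relevant. Weight of a monomial (additive extension). *)
definition mwt :: "('v \<Rightarrow> nat \<Rightarrow> nat) \<Rightarrow> ('v \<Rightarrow>\<^sub>0 nat) \<Rightarrow> nat \<Rightarrow> nat" where
  "mwt wt m = (\<lambda>j. \<Sum>v\<in>Poly_Mapping.keys m. Poly_Mapping.lookup m v * wt v j)"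

definition lexless :: "nat \<Rightarrow> (nat \<Rightarrow> nat) \<Rightarrow> (nat \<Rightarrow> nat) \<Rightarrow> bool" where
  "lexless n a b \<longleftrightarrow> (\<exists>i<n. (\<forall>j<i. a j = b j) \<and> a i < b i)"

definition veq :: "nat \<Rightarrow> (nat \<Rightarrow> nat) \<Rightarrow> (nat \<Rightarrow> nat) \<Rightarrow> bool" where
  "veq n a b \<longleftrightarrow> (\<forall>j<n. a j = b j)"

definition separates :: "nat \<Rightarrow> ('v \<Rightarrow> nat \<Rightarrow> nat) \<Rightarrow> ('v \<Rightarrow>\<^sub>0 nat) set \<Rightarrow> bool" where
  "separates n wt S \<longleftrightarrow>
     (\<forall>m\<in>S. \<forall>m'\<in>S. m \<noteq> m' \<longrightarrow> \<not> veq n (mwt wt m) (mwt wt m'))"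

(* Column V_m of the space V is the linear functional f |-> coefficient of m in f.
  Column V_m lies in the span of the columns {V_m' : m'  in  S} (S finite). *)
definition col_in_span :: "('v, 'a::field) mpoly set \<Rightarrow> ('v \<Rightarrow>\<^sub>0 nat) \<Rightarrow> ('v \<Rightarrow>\<^sub>0 nat) set \<Rightarrow> bool" where
  "col_in_span V m S \<longleftrightarrow>
     (\<exists>c. \<forall>f\<in>V. Poly_Mapping.lookup f m = (\<Sum>m'\<in>S. c m' * Poly_Mapping.lookup f m'))"

definition cols_indep :: "('v, 'a::field) mpoly set \<Rightarrow> ('v \<Rightarrow>\<^sub>0 nat) set \<Rightarrow> bool" where
  "cols_indep V B \<longleftrightarrow>
     (\<forall>c. (\<forall>f\<in>V. (\<Sum>m\<in>B. c m * Poly_Mapping.lookup f m) = 0) \<longrightarrow> (\<forall>m\<in>B. c m = 0))"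

definition cols_basis :: "('v, 'a::field) mpoly set \<Rightarrow> ('v \<Rightarrow>\<^sub>0 nat) set \<Rightarrow> bool" where
  "cols_basis V B \<longleftrightarrow> finite B \<and> cols_indep V B \<and> (\<forall>m. col_in_span V m B)"

definition BIWA :: "nat \<Rightarrow> ('v \<Rightarrow> nat \<Rightarrow> nat) \<Rightarrow> ('v, 'a::field) mpoly set \<Rightarrow> ('v \<Rightarrow>\<^sub>0 nat) set \<Rightarrow> bool" where
  "BIWA n wt V B \<longleftrightarrow>
     cols_basis V B \<and> separates n wt B \<and>
     (\<forall>m. m \<notin> B \<longrightarrow>
        col_in_span V m {m'\<in>B. lexless n (mwt wt m') (mwt wt m)})"

end

(*
  Coefficients of a product f g, with f in the y-variables and g in the z-variables, factor: the
  coefficient of y^a z^b is f_a g_b, and all other monomials have coefficient 0. So the column of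
  y^a z^b in V1 V2 is the "tensor product" of the columns of y^a in V1 and of z^b in V2. Expressing
  both factor columns through lexicographically smaller basis columns and multiplying the two
  relations expresses the product column through products a' b' with a' <= a and b' <= b, at least
  one strictly; since the first k coordinates of the joined weight add up, these products are
  lexicographically smaller. Conversely a vanishing combination of the columns indexed by B1 B2
  becomes, for each fixed g, a vanishing combination of the columns of V1 indexed by B1, hence all
  its coefficients vanish by independence in V1 and then in V2. The last coordinate w separates
  B1 B2, so the joined weight does.
*)

theory Submission
  imports Defs "HOL-Library.Set_Algebras"
begin

definition vars_in :: "'v set \<Rightarrow> ('v, 'a::zero) mpoly \<Rightarrow> bool" where
  "vars_in Y f \<longleftrightarrow> (\<forall>m\<in>Poly_Mapping.keys f. Poly_Mapping.keys m \<subseteq> Y)"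

lemma vars_inD: "vars_in Y f \<Longrightarrow> \<not> Poly_Mapping.keys m \<subseteq> Y \<Longrightarrow> Poly_Mapping.lookup f m = 0"
  unfolding vars_in_def by (auto simp: in_keys_iff)

lemma lookup_map_scale:
  "Poly_Mapping.lookup (Poly_Mapping.map (\<lambda>x. c * x) f) m = (c::'a::field) * Poly_Mapping.lookup f m"
  by (simp add: Poly_Mapping.map.rep_eq when_def)

lemma lookup_pspan:
  assumes "p \<in> pspan S"
  obtains F c where "finite F" "F \<subseteq> S"
    "\<And>m. Poly_Mapping.lookup p m = (\<Sum>f\<in>F. c f * Poly_Mapping.lookup f m)"
proof -
  from assms obtain F c where "finite F" "F \<subseteq> S" and p: "p = (\<Sum>f\<in>F. Poly_Mapping.map (\<lambda>x. c f * x) f)"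
    unfolding pspan_def by blast
  moreover have "Poly_Mapping.lookup p m = (\<Sum>f\<in>F. c f * Poly_Mapping.lookup f m)" for m
    unfolding p lookup_sum lookup_map_scale ..
  ultimately show thesis using that by blast
qed

lemma subset_pspan: "S \<subseteq> pspan S"
proof
  fix p assume "p \<in> S"
  have p: "p = (\<Sum>f\<in>{p}. Poly_Mapping.map (\<lambda>x. 1 * x) f)"
    by (intro poly_mapping_eqI) (simp only: lookup_sum lookup_map_scale, simp)
  show "p \<in> pspan S"
    unfolding pspan_def
    by (intro CollectI exI[of _ "{p}"] exI[of _ "\<lambda>_. 1"] conjI p) (use \<open>p \<in> S\<close> in auto)
qed

lemma col_in_span_pspan:
  assumes "col_in_span S m T"
  shows "col_in_span (pspan S) m T"
proof -
  obtain d where d: "\<And>f. f \<in> S \<Longrightarrow> Poly_Mapping.lookup f m = (\<Sum>m'\<in>T. d m' * Poly_Mapping.lookup f m')"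
    using assms unfolding col_in_span_def by blast
  have "Poly_Mapping.lookup p m = (\<Sum>m'\<in>T. d m' * Poly_Mapping.lookup p m')" if "p \<in> pspan S" for p
  proof -
    obtain F c where F: "F \<subseteq> S"
      and p: "\<And>m. Poly_Mapping.lookup p m = (\<Sum>f\<in>F. c f * Poly_Mapping.lookup f m)"
      using lookup_pspan[OF \<open>p \<in> pspan S\<close>] by metis
    have "Poly_Mapping.lookup p m = (\<Sum>f\<in>F. c f * (\<Sum>m'\<in>T. d m' * Poly_Mapping.lookup f m'))"
      unfolding p using F by (intro sum.cong refl, subst d) auto
    also have "\<dots> = (\<Sum>m'\<in>T. \<Sum>f\<in>F. d m' * (c f * Poly_Mapping.lookup f m'))"
      by (subst sum.swap) (simp add: sum_distrib_left mult.left_commute)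
    also have "\<dots> = (\<Sum>m'\<in>T. d m' * Poly_Mapping.lookup p m')"
      by (simp only: p sum_distrib_left)
    finally show ?thesis .
  qed
  then show ?thesis unfolding col_in_span_def by (intro exI[of _ d] ballI)
qed

lemma vars_in_pspan:
  assumes "\<forall>f\<in>S. vars_in Y f" "p \<in> pspan S"
  shows "vars_in Y p"
proof -
  have "Poly_Mapping.lookup p m = 0" if "\<not> Poly_Mapping.keys m \<subseteq> Y" for m
  proof -
    have "\<forall>f\<in>S. Poly_Mapping.lookup f m = 0"
      using assms(1) that vars_inD by blast
    then have "col_in_span S m {}"
      unfolding col_in_span_def by simp
    then have "col_in_span (pspan S) m {}"
      by (rule col_in_span_pspan)
    then show ?thesis
      using assms(2) unfolding col_in_span_def by simp
  qed
  then show ?thesis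
    unfolding vars_in_def in_keys_iff by blast
qed

lemma col_in_span_mono:
  assumes "col_in_span V m S" "S \<subseteq> T" "finite T"
  shows "col_in_span V m T"
proof -
  obtain c where c: "\<forall>f\<in>V. Poly_Mapping.lookup f m = (\<Sum>m'\<in>S. c m' * Poly_Mapping.lookup f m')"
    using assms(1) unfolding col_in_span_def by blast
  have "(\<Sum>m'\<in>T. of_bool (m' \<in> S) * c m' * Poly_Mapping.lookup f m')
      = (\<Sum>m'\<in>S. c m' * Poly_Mapping.lookup f m')" for f
    using assms(2,3) by (simp add: mult.assoc Int_absorb1)
  then show ?thesis unfolding col_in_span_def
    using c by (intro exI[of _ "\<lambda>m'. of_bool (m' \<in> S) * c m'"]) simp
qed

lemma col_in_span_self:
  assumes "m \<in> T" "finite T"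
  shows "col_in_span V m T"
  unfolding col_in_span_def
  by (rule exI[of _ "\<lambda>m'. of_bool (m' = m)"]) (simp add: assms Int_absorb1)

lemma cols_indep_mono: "cols_indep V B \<Longrightarrow> V \<subseteq> V' \<Longrightarrow> cols_indep V' B"
  unfolding cols_indep_def by blast

lemma cols_indepD:
  assumes "cols_indep V B" "\<And>f. f \<in> V \<Longrightarrow> (\<Sum>m'\<in>B. c m' * Poly_Mapping.lookup f m') = 0" "m \<in> B"
  shows "c m = 0"
  using assms unfolding cols_indep_def by blast

lemma cols_indep_col_nonzero:
  fixes V :: "('v, 'a::field) mpoly set"
  assumes "cols_indep V B" "finite B" "m \<in> B"
  shows "\<exists>f\<in>V. Poly_Mapping.lookup f m \<noteq> 0"
proof (rule ccontr)
  assume "\<not> ?thesis"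
  then have "\<forall>f\<in>V. (\<Sum>m'\<in>B. of_bool (m' = m) * Poly_Mapping.lookup f m') = 0"
    using assms(2,3) by (simp add: Int_absorb1)
  then have "of_bool (m = m) = (0::'a)"
    using cols_indepD[OF assms(1) _ assms(3), of "\<lambda>m'. of_bool (m' = m)"] by blast
  then show False by simp
qed

lemma cols_indep_keys_subset:
  assumes "cols_indep V B" "finite B" "\<forall>f\<in>V. vars_in Y f" "m \<in> B"
  shows "Poly_Mapping.keys m \<subseteq> Y"
  using cols_indep_col_nonzero[OF assms(1,2,4)] assms(3) vars_inD by blast

subsection \<open>Products of polynomials in disjoint variables\<close>

lemma add_eq_add_disjoint_keys:
  assumes "Y \<inter> Z = {}"
    and "Poly_Mapping.keys a \<subseteq> Y" "Poly_Mapping.keys a' \<subseteq> Y"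
    and "Poly_Mapping.keys b \<subseteq> Z" "Poly_Mapping.keys b' \<subseteq> Z"
    and "a + b = a' + (b' :: 'v \<Rightarrow>\<^sub>0 nat)"
  shows "a = a'" "b = b'"
proof -
  have "Poly_Mapping.lookup a v = Poly_Mapping.lookup a' v \<and> Poly_Mapping.lookup b v = Poly_Mapping.lookup b' v" for v
  proof -
    have sum: "Poly_Mapping.lookup a v + Poly_Mapping.lookup b v = Poly_Mapping.lookup a' v + Poly_Mapping.lookup b' v"
      using assms(6) by (metis lookup_add)
    show ?thesis
    proof (cases "v \<in> Y")
      case True
      then have "v \<notin> Poly_Mapping.keys b" "v \<notin> Poly_Mapping.keys b'" using assms by auto
      then show ?thesis using sum by (simp add: in_keys_iff)
    next
      case False
      then have "v \<notin> Poly_Mapping.keys a" "v \<notin> Poly_Mapping.keys a'" using assms by auto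
      then show ?thesis using sum by (simp add: in_keys_iff)
    qed
  qed
  then show "a = a'" "b = b'" by (auto intro: poly_mapping_eqI)
qed

lemma inj_on_add_disjoint_keys:
  assumes "Y \<inter> Z = {}"
    and "\<forall>a\<in>A. Poly_Mapping.keys a \<subseteq> Y" "\<forall>b\<in>B. Poly_Mapping.keys b \<subseteq> Z"
  shows "inj_on (\<lambda>(a, b). a + b :: 'v \<Rightarrow>\<^sub>0 nat) (A \<times> B)"
proof (rule inj_onI)
  fix x y assume "x \<in> A \<times> B" "y \<in> A \<times> B" "(\<lambda>(a, b). a + b) x = (\<lambda>(a, b). a + b) y"
  moreover obtain a b a' b' where xy: "x = (a, b)" "y = (a', b')" by fastforce
  ultimately have "a \<in> A" "a' \<in> A" "b \<in> B" "b' \<in> B" "a + b = a' + b'" by auto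
  then show "x = y"
    using xy add_eq_add_disjoint_keys[OF assms(1), of a a' b b'] assms(2,3) by simp
qed

lemma Sum_any_when_zero:
  assumes "\<And>x. f x \<noteq> 0 \<Longrightarrow> \<not> P x"
  shows "(\<Sum>x. f x when P x) = 0"
proof -
  have "(f x when P x) = 0" for x
    using assms[of x] by (cases "P x") auto
  then show ?thesis by simp
qed

lemma lookup_mult_disjoint_vars:
  assumes disj: "Y \<inter> Z = {}" and "vars_in Y f" "vars_in Z g"
    and a: "Poly_Mapping.keys a \<subseteq> Y" and b: "Poly_Mapping.keys b \<subseteq> Z"
  shows "Poly_Mapping.lookup (f * g) (a + b) = Poly_Mapping.lookup f a * Poly_Mapping.lookup g b"
proof -
  have "Poly_Mapping.lookup f l * (\<Sum>q. Poly_Mapping.lookup g q when a + b = l + q)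
      = (Poly_Mapping.lookup f a * Poly_Mapping.lookup g b when l = a)" for l
  proof (cases "l = a")
    case False
    show ?thesis
    proof (cases "Poly_Mapping.lookup f l = 0")
      case False
      then have "Poly_Mapping.keys l \<subseteq> Y" using \<open>vars_in Y f\<close> vars_inD by blast
      then have "(\<Sum>q. Poly_Mapping.lookup g q when a + b = l + q) = 0"
        using \<open>l \<noteq> a\<close> add_eq_add_disjoint_keys(1)[OF disj a _ b] \<open>vars_in Z g\<close> vars_inD
        by (intro Sum_any_when_zero) blast
      then show ?thesis using \<open>l \<noteq> a\<close> by simp
    qed (simp add: \<open>l \<noteq> a\<close>)
  qed simp
  then show ?thesis
    unfolding lookup_mult by (simp add: Sum_any_when_equal)
qed

lemma lookup_mult_disjoint_vars_eq_0:
  assumes "vars_in Y f" "vars_in Z g"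
    and "\<nexists>a b. m = a + b \<and> Poly_Mapping.keys a \<subseteq> Y \<and> Poly_Mapping.keys b \<subseteq> Z"
  shows "Poly_Mapping.lookup (f * g) m = 0"
proof -
  have "Poly_Mapping.lookup f l * (\<Sum>q. Poly_Mapping.lookup g q when m = l + q) = 0" for l
  proof (cases "Poly_Mapping.lookup f l = 0")
    case False
    then have "Poly_Mapping.keys l \<subseteq> Y" using assms(1) vars_inD by blast
    then have "(\<Sum>q. Poly_Mapping.lookup g q when m = l + q) = 0"
      using assms(2,3) vars_inD by (intro Sum_any_when_zero) blast
    then show ?thesis by simp
  qed simp
  then show ?thesis
    unfolding lookup_mult by simp
qed

lemma sum_set_plus_disjoint_keys:
  fixes A B :: "('v \<Rightarrow>\<^sub>0 nat) set"
  assumes "Y \<inter> Z = {}"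
    and "\<forall>a\<in>A. Poly_Mapping.keys a \<subseteq> Y" "\<forall>b\<in>B. Poly_Mapping.keys b \<subseteq> Z"
  shows "(\<Sum>m\<in>A + B. h m) = (\<Sum>a\<in>A. \<Sum>b\<in>B. h (a + b))"
  unfolding set_plus_image sum.reindex[OF inj_on_add_disjoint_keys[OF assms]] sum.cartesian_product
  by (intro sum.cong) auto

lemma cols_indep_mult:
  assumes disj: "Y \<inter> Z = {}"
    and vars1: "\<forall>f\<in>V1. vars_in Y f" and vars2: "\<forall>g\<in>V2. vars_in Z g"
    and indep1: "cols_indep V1 B1" and indep2: "cols_indep V2 B2"
    and "finite B1" "finite B2"
  shows "cols_indep (V1 * V2) (B1 + B2)"
  unfolding cols_indep_def
proof (intro allI impI ballI)
  fix c m
  assume c: "\<forall>p\<in>V1 * V2. (\<Sum>m\<in>B1 + B2. c m * Poly_Mapping.lookup p m) = 0" and "m \<in> B1 + B2"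
  then obtain a0 b0 where m: "m = a0 + b0" "a0 \<in> B1" "b0 \<in> B2" by (auto elim: set_plus_elim)
  have B1Y: "\<forall>a\<in>B1. Poly_Mapping.keys a \<subseteq> Y" and B2Z: "\<forall>b\<in>B2. Poly_Mapping.keys b \<subseteq> Z"
    using cols_indep_keys_subset \<open>finite B1\<close> \<open>finite B2\<close> indep1 indep2 vars1 vars2 by blast+
  have factored: "(\<Sum>a\<in>B1. (\<Sum>b\<in>B2. c (a + b) * Poly_Mapping.lookup g b) * Poly_Mapping.lookup f a) = 0"
    if "f \<in> V1" "g \<in> V2" for f g
  proof -
    have "0 = (\<Sum>m\<in>B1 + B2. c m * Poly_Mapping.lookup (f * g) m)"
      using c that by auto
    also have "\<dots> = (\<Sum>a\<in>B1. \<Sum>b\<in>B2. c (a + b) * Poly_Mapping.lookup (f * g) (a + b))"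
      by (rule sum_set_plus_disjoint_keys[OF disj B1Y B2Z])
    also have "\<dots> = (\<Sum>a\<in>B1. (\<Sum>b\<in>B2. c (a + b) * Poly_Mapping.lookup g b) * Poly_Mapping.lookup f a)"
      using B1Y B2Z vars1 vars2 that
      by (simp add: lookup_mult_disjoint_vars[OF disj] sum_distrib_left sum_distrib_right mult_ac)
    finally show ?thesis by simp
  qed
  txt \<open>For fixed \<open>g\<close>, the inner sums are the coefficients of a vanishing combination of the
    columns of \<open>V1\<close>.\<close>
  have "(\<Sum>b\<in>B2. c (a0 + b) * Poly_Mapping.lookup g b) = 0" if "g \<in> V2" for g
    by (rule cols_indepD[OF indep1 _ m(2), of "\<lambda>a. \<Sum>b\<in>B2. c (a + b) * Poly_Mapping.lookup g b"])
      (use factored that in simp)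
  then show "c m = 0"
    using cols_indepD[OF indep2 _ m(3), of "\<lambda>b. c (a0 + b)"] m(1) by simp
qed

lemma col_in_span_mult:
  assumes disj: "Y \<inter> Z = {}"
    and vars1: "\<forall>f\<in>V1. vars_in Y f" and vars2: "\<forall>g\<in>V2. vars_in Z g"
    and a: "Poly_Mapping.keys a \<subseteq> Y" and b: "Poly_Mapping.keys b \<subseteq> Z"
    and T1Y: "\<forall>a\<in>T1. Poly_Mapping.keys a \<subseteq> Y" and T2Z: "\<forall>b\<in>T2. Poly_Mapping.keys b \<subseteq> Z"
    and "finite T1" "finite T2"
    and "col_in_span V1 a T1" "col_in_span V2 b T2"
  shows "col_in_span (V1 * V2) (a + b) (T1 + T2)"
proof -
  obtain c1 where c1: "\<forall>f\<in>V1. Poly_Mapping.lookup f a = (\<Sum>a'\<in>T1. c1 a' * Poly_Mapping.lookup f a')"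
    using \<open>col_in_span V1 a T1\<close> unfolding col_in_span_def by blast
  obtain c2 where c2: "\<forall>g\<in>V2. Poly_Mapping.lookup g b = (\<Sum>b'\<in>T2. c2 b' * Poly_Mapping.lookup g b')"
    using \<open>col_in_span V2 b T2\<close> unfolding col_in_span_def by blast
  txt \<open>Summing over all factorisations \<open>m = a' + b'\<close> avoids needing injectivity of addition here.\<close>
  define C where "C m = (\<Sum>a'\<in>T1. \<Sum>b'\<in>T2. c1 a' * c2 b' * of_bool (m = a' + b'))" for m
  have "Poly_Mapping.lookup p (a + b) = (\<Sum>m\<in>T1 + T2. C m * Poly_Mapping.lookup p m)"
    if "p \<in> V1 * V2" for p
  proof -
    obtain f g where p: "p = f * g" "f \<in> V1" "g \<in> V2"
      using \<open>p \<in> V1 * V2\<close> by (auto elim: set_times_elim)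
    have "Poly_Mapping.lookup p (a + b)
        = (\<Sum>a'\<in>T1. c1 a' * Poly_Mapping.lookup f a') * (\<Sum>b'\<in>T2. c2 b' * Poly_Mapping.lookup g b')"
      using p vars1 vars2 c1 c2 by (simp add: lookup_mult_disjoint_vars[OF disj _ _ a b])
    also have "\<dots> = (\<Sum>a'\<in>T1. \<Sum>b'\<in>T2. c1 a' * c2 b' * Poly_Mapping.lookup p (a' + b'))"
      using p vars1 vars2 T1Y T2Z
      by (simp add: sum_product lookup_mult_disjoint_vars[OF disj] mult_ac)
    also have "\<dots> = (\<Sum>a'\<in>T1. \<Sum>b'\<in>T2. c1 a' * c2 b'
        * (\<Sum>m\<in>T1 + T2. if m = a' + b' then Poly_Mapping.lookup p m else 0))"
      using \<open>finite T1\<close> \<open>finite T2\<close> by (simp add: finite_set_plus set_plus_intro)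
    also have "\<dots> = (\<Sum>m\<in>T1 + T2. C m * Poly_Mapping.lookup p m)"
      unfolding C_def sum_distrib_left sum_distrib_right
      by (subst (2) sum.swap, subst sum.swap) (intro sum.cong refl; simp)
    finally show ?thesis .
  qed
  then show ?thesis
    unfolding col_in_span_def by blast
qed

subsection \<open>Weights and the lexicographic order\<close>

lemma mwt_add: "mwt wt (a + b) j = mwt wt a j + mwt wt b j"
proof -
  have on_superset: "mwt wt m j = (\<Sum>v\<in>K. Poly_Mapping.lookup m v * wt v j)"
    if "finite K" "Poly_Mapping.keys m \<subseteq> K" for K m
    unfolding mwt_def using that by (intro sum.mono_neutral_left) (auto simp: in_keys_iff)
  let ?K = "Poly_Mapping.keys a \<union> Poly_Mapping.keys b"
  have "mwt wt (a + b) j = (\<Sum>v\<in>?K. Poly_Mapping.lookup (a + b) v * wt v j)"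
    using keys_add[of a b] by (intro on_superset) auto
  also have "\<dots> = mwt wt a j + mwt wt b j"
    by (simp add: on_superset[of ?K a] on_superset[of ?K b] lookup_add algebra_simps sum.distrib)
  finally show ?thesis .
qed

lemma mwt_cong: "(\<And>v. v \<in> Poly_Mapping.keys m \<Longrightarrow> wt v j = wt' v j) \<Longrightarrow> mwt wt m j = mwt wt' m j"
  unfolding mwt_def by simp

lemma lexless_add_strict:
  assumes "lexless n x x'" "lexless n y y'"
  shows "lexless n (\<lambda>j. x j + y j) (\<lambda>j. x' j + y' j)"
proof -
  obtain i1 where i1: "i1 < n" "\<forall>j<i1. x j = x' j" "x i1 < x' i1"
    using assms(1) unfolding lexless_def by blast
  obtain i2 where i2: "i2 < n" "\<forall>j<i2. y j = y' j" "y i2 < y' i2"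
    using assms(2) unfolding lexless_def by blast
  have "x (min i1 i2) + y (min i1 i2) < x' (min i1 i2) + y' (min i1 i2)"
    using i1 i2 by (cases i1 i2 rule: linorder_cases) auto
  moreover have "\<forall>j<min i1 i2. x j + y j = x' j + y' j"
    using i1 i2 by simp
  ultimately show ?thesis
    unfolding lexless_def using i1 by (intro exI[of _ "min i1 i2"]) simp
qed

lemma lexless_add:
  assumes "x = x' \<or> lexless n x x'" "y = y' \<or> lexless n y y'" "lexless n x x' \<or> lexless n y y'"
  shows "lexless n (\<lambda>j. x j + y j) (\<lambda>j. x' j + y' j)"
proof -
  consider "lexless n x x'" "lexless n y y'" | "lexless n x x'" "y = y'" | "x = x'" "lexless n y y'"
    using assms by blast
  then show ?thesis
  proof cases
    case 1
    then show ?thesis by (rule lexless_add_strict)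
  qed (auto simp: lexless_def)
qed

lemma lexless_extend:
  assumes "lexless n x y" "n \<le> n'" "\<forall>j<n. u j = x j \<and> v j = y j"
  shows "lexless n' u v"
  using assms unfolding lexless_def by (metis order_less_le_trans order.strict_trans)

subsection \<open>Characterising BIWAs by lower sets\<close>

text \<open>The top element is singled out by equality of monomials, not of weights, so that for
  \<open>m \<notin> B\<close> this is exactly the set of columns allowed in the definition of a BIWA.\<close>

definition lex_lower :: "nat \<Rightarrow> ('v \<Rightarrow> nat \<Rightarrow> nat) \<Rightarrow> ('v \<Rightarrow>\<^sub>0 nat) set \<Rightarrow> ('v \<Rightarrow>\<^sub>0 nat) \<Rightarrow> ('v \<Rightarrow>\<^sub>0 nat) set" where
  "lex_lower n wt B m = {m'\<in>B. m' = m \<or> lexless n (mwt wt m') (mwt wt m)}"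

lemma BIWA_col_in_span_lex_lower:
  assumes "BIWA n wt V B"
  shows "col_in_span V m (lex_lower n wt B m)"
proof -
  have "finite (lex_lower n wt B m)"
    using assms unfolding BIWA_def cols_basis_def lex_lower_def by simp
  show ?thesis
  proof (cases "m \<in> B")
    case True
    then show ?thesis
      using \<open>finite (lex_lower n wt B m)\<close> by (intro col_in_span_self) (simp_all add: lex_lower_def)
  next
    case False
    then show ?thesis
      using assms \<open>finite (lex_lower n wt B m)\<close> unfolding BIWA_def
      by (auto intro: col_in_span_mono simp: lex_lower_def)
  qed
qed

lemma BIWA_if_col_in_span_lex_lower:
  assumes "finite B" "cols_indep V B" "separates n wt B"
    and lower: "\<And>m. col_in_span V m (lex_lower n wt B m)"
  shows "BIWA n wt V B"
proof -
  have "col_in_span V m B" for m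
    by (rule col_in_span_mono[OF lower _ \<open>finite B\<close>]) (auto simp: lex_lower_def)
  moreover have "lex_lower n wt B m = {m' \<in> B. lexless n (mwt wt m') (mwt wt m)}" if "m \<notin> B" for m
    using that by (auto simp: lex_lower_def)
  ultimately show ?thesis
    using assms unfolding BIWA_def cols_basis_def by metis
qed

definition join_weight ::
    "nat \<Rightarrow> 'v set \<Rightarrow> ('v \<Rightarrow> nat \<Rightarrow> nat) \<Rightarrow> ('v \<Rightarrow> nat \<Rightarrow> nat) \<Rightarrow> ('v \<Rightarrow> nat) \<Rightarrow> 'v \<Rightarrow> nat \<Rightarrow> nat" where
  "join_weight k Y wt1 wt2 w = (\<lambda>v j. if j < k then (if v \<in> Y then wt1 v j else wt2 v j) else w v)"

lemma mwt_join_weight_add: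
  assumes "Y \<inter> Z = {}" "Poly_Mapping.keys a \<subseteq> Y" "Poly_Mapping.keys b \<subseteq> Z" "j < k"
  shows "mwt (join_weight k Y wt1 wt2 w) (a + b) j = mwt wt1 a j + mwt wt2 b j"
proof -
  have "mwt (join_weight k Y wt1 wt2 w) a j = mwt wt1 a j"
    using assms by (intro mwt_cong) (auto simp: join_weight_def)
  moreover have "mwt (join_weight k Y wt1 wt2 w) b j = mwt wt2 b j"
    using assms by (intro mwt_cong) (auto simp: join_weight_def)
  ultimately show ?thesis by (simp add: mwt_add)
qed

lemma mwt_join_weight_last: "mwt (join_weight k Y wt1 wt2 w) m k = mwt (\<lambda>v j. w v) m 0"
  unfolding mwt_def join_weight_def by simp

lemma separates_join_weight:
  assumes "separates 1 (\<lambda>v j. w v) B"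
  shows "separates (k + 1) (join_weight k Y wt1 wt2 w) B"
  unfolding separates_def
proof (intro ballI impI)
  fix m m' assume "m \<in> B" "m' \<in> B" "m \<noteq> m'"
  then have "mwt (\<lambda>v j. w v) m 0 \<noteq> mwt (\<lambda>v j. w v) m' 0"
    using assms unfolding separates_def veq_def by blast
  then show "\<not> veq (k + 1) (mwt (join_weight k Y wt1 wt2 w) m) (mwt (join_weight k Y wt1 wt2 w) m')"
    unfolding veq_def by (metis mwt_join_weight_last less_add_one)
qed

lemma lex_lower_mult:
  assumes disj: "Y \<inter> Z = {}"
    and a: "Poly_Mapping.keys a \<subseteq> Y" and b: "Poly_Mapping.keys b \<subseteq> Z"
    and B1Y: "\<forall>a\<in>B1. Poly_Mapping.keys a \<subseteq> Y" and B2Z: "\<forall>b\<in>B2. Poly_Mapping.keys b \<subseteq> Z"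
  shows "lex_lower k wt1 B1 a + lex_lower k wt2 B2 b
    \<subseteq> lex_lower (k + 1) (join_weight k Y wt1 wt2 w) (B1 + B2) (a + b)"
proof
  fix m assume "m \<in> lex_lower k wt1 B1 a + lex_lower k wt2 B2 b"
  then obtain a' b' where m: "m = a' + b'"
    and a': "a' \<in> lex_lower k wt1 B1 a" and b': "b' \<in> lex_lower k wt2 B2 b"
    by (auto elim: set_plus_elim)
  then have "a' \<in> B1" "b' \<in> B2" by (simp_all add: lex_lower_def)
  then have "m \<in> B1 + B2" using m by blast
  show "m \<in> lex_lower (k + 1) (join_weight k Y wt1 wt2 w) (B1 + B2) (a + b)"
  proof (cases "a' = a \<and> b' = b")
    case True
    then show ?thesis using \<open>m \<in> B1 + B2\<close> m by (simp add: lex_lower_def)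
  next
    case False
    have "lexless k (\<lambda>j. mwt wt1 a' j + mwt wt2 b' j) (\<lambda>j. mwt wt1 a j + mwt wt2 b j)"
      using a' b' False by (intro lexless_add) (auto simp: lex_lower_def)
    then have "lexless (k + 1) (mwt (join_weight k Y wt1 wt2 w) m) (mwt (join_weight k Y wt1 wt2 w) (a + b))"
      by (rule lexless_extend)
        (use m a b B1Y B2Z \<open>a' \<in> B1\<close> \<open>b' \<in> B2\<close> in \<open>simp_all add: mwt_join_weight_add[OF disj]\<close>)
    then show ?thesis using \<open>m \<in> B1 + B2\<close> by (simp add: lex_lower_def)
  qed
qed

lemma col_in_span_mult_lex_lower:
  assumes disj: "Y \<inter> Z = {}"
    and vars1: "\<forall>f\<in>V1. vars_in Y f" and vars2: "\<forall>g\<in>V2. vars_in Z g"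
    and biwa1: "BIWA k wt1 V1 B1" and biwa2: "BIWA k wt2 V2 B2"
  shows "col_in_span (pspan (V1 * V2)) m (lex_lower (k + 1) (join_weight k Y wt1 wt2 w) (B1 + B2) m)"
proof -
  have "finite B1" "finite B2" "cols_indep V1 B1" "cols_indep V2 B2"
    using biwa1 biwa2 unfolding BIWA_def cols_basis_def by auto
  then have B1Y: "\<forall>a\<in>B1. Poly_Mapping.keys a \<subseteq> Y" and B2Z: "\<forall>b\<in>B2. Poly_Mapping.keys b \<subseteq> Z"
    using cols_indep_keys_subset vars1 vars2 by blast+
  have fin: "finite (lex_lower (k + 1) (join_weight k Y wt1 wt2 w) (B1 + B2) m)"
    using \<open>finite B1\<close> \<open>finite B2\<close> by (simp add: lex_lower_def finite_set_plus)
  show ?thesis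
  proof (cases "\<exists>a b. m = a + b \<and> Poly_Mapping.keys a \<subseteq> Y \<and> Poly_Mapping.keys b \<subseteq> Z")
    case True
    then obtain a b where m: "m = a + b"
      and a: "Poly_Mapping.keys a \<subseteq> Y" and b: "Poly_Mapping.keys b \<subseteq> Z" by blast
    have "col_in_span (V1 * V2) m (lex_lower k wt1 B1 a + lex_lower k wt2 B2 b)"
      unfolding m using B1Y B2Z \<open>finite B1\<close> \<open>finite B2\<close>
      by (intro col_in_span_mult[OF disj vars1 vars2 a b] BIWA_col_in_span_lex_lower biwa1 biwa2)
        (auto simp: lex_lower_def)
    then show ?thesis
      unfolding m using lex_lower_mult[OF disj a b B1Y B2Z] fin m
      by (blast intro: col_in_span_mono col_in_span_pspan)
  next
    case False
    then have "\<forall>p\<in>V1 * V2. Poly_Mapping.lookup p m = 0"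
      using vars1 vars2 lookup_mult_disjoint_vars_eq_0 by (fastforce elim: set_times_elim)
    then have "col_in_span (V1 * V2) m {}"
      unfolding col_in_span_def by simp
    then have "col_in_span (pspan (V1 * V2)) m {}"
      by (rule col_in_span_pspan)
    then show ?thesis
      by (rule col_in_span_mono[OF _ _ fin]) simp
  qed
qed

theorem lemma5p4:
  fixes Y Z :: "'v set"
    and S1 S2 :: "('v, 'a::field) mpoly set"
    and wt1 wt2 :: "'v \<Rightarrow> nat \<Rightarrow> nat"
    and w :: "'v \<Rightarrow> nat"
    and B1 B2 :: "('v \<Rightarrow>\<^sub>0 nat) set"
    and k :: nat
  assumes disj: "Y \<inter> Z = {}"
    and fin1: "finite S1" and fin2: "finite S2"
    and vars1: "\<forall>f\<in>S1. \<forall>m\<in>Poly_Mapping.keys f. Poly_Mapping.keys m \<subseteq> Y"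
    and vars2: "\<forall>g\<in>S2. \<forall>m\<in>Poly_Mapping.keys g. Poly_Mapping.keys m \<subseteq> Z"
    and biwa1: "BIWA k wt1 (pspan S1) B1"
    and biwa2: "BIWA k wt2 (pspan S2) B2"
    and sep: "separates 1 (\<lambda>v j. w v) {m1 + m2 | m1 m2. m1 \<in> B1 \<and> m2 \<in> B2}"
  shows "BIWA (k + 1)
           (\<lambda>v j. if j < k then (if v \<in> Y then wt1 v j else wt2 v j) else w v)
           (pspan {f * g | f g. f \<in> pspan S1 \<and> g \<in> pspan S2})
           {m1 + m2 | m1 m2. m1 \<in> B1 \<and> m2 \<in> B2}"
proof -
  have B: "{m1 + m2 | m1 m2. m1 \<in> B1 \<and> m2 \<in> B2} = B1 + B2"
    unfolding set_plus_def by blast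
  have V: "{f * g | f g. f \<in> pspan S1 \<and> g \<in> pspan S2} = pspan S1 * pspan S2"
    unfolding set_times_def by blast
  have V1: "\<forall>f\<in>pspan S1. vars_in Y f" and V2: "\<forall>g\<in>pspan S2. vars_in Z g"
    using vars1 vars2 vars_in_pspan unfolding vars_in_def by blast+
  have "finite B1" "finite B2" "cols_indep (pspan S1) B1" "cols_indep (pspan S2) B2"
    using biwa1 biwa2 unfolding BIWA_def cols_basis_def by auto
  have "BIWA (k + 1) (join_weight k Y wt1 wt2 w) (pspan (pspan S1 * pspan S2)) (B1 + B2)"
  proof (rule BIWA_if_col_in_span_lex_lower)
    show "finite (B1 + B2)"
      using \<open>finite B1\<close> \<open>finite B2\<close> by (rule finite_set_plus)
    show "cols_indep (pspan (pspan S1 * pspan S2)) (B1 + B2)"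
      using cols_indep_mult[OF disj V1 V2] \<open>cols_indep (pspan S1) B1\<close> \<open>cols_indep (pspan S2) B2\<close>
        \<open>finite B1\<close> \<open>finite B2\<close> subset_pspan by (blast intro: cols_indep_mono)
    show "separates (k + 1) (join_weight k Y wt1 wt2 w) (B1 + B2)"
      using sep unfolding B by (rule separates_join_weight)
    show "col_in_span (pspan (pspan S1 * pspan S2)) m
        (lex_lower (k + 1) (join_weight k Y wt1 wt2 w) (B1 + B2) m)" for m
      by (rule col_in_span_mult_lex_lower[OF disj V1 V2 biwa1 biwa2])
  qed
  then show ?thesis
    unfolding B V join_weight_def .
qed

end
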